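(* Let $X=\mathbb Z$, $m\equiv1$, $b(x,y)=1$ if $|x-y|=1$ and $b(x,y)=0$ otherwise, and $D=2\mathbb Z$. Then for every $T>0$, $r\in[1,\infty]$ and $K\ge0$ the linear control problem $(H,D)$ is not $(0,T,r,K)$-controllable.
   Context: $H$ is the weighted Laplacian on $\ell_2(X,m)$, $Hf(x)=\frac1{m(x)}\sum_yb(x,y)(f(x)-f(y))$ (here $Hf(x)=2f(x)-f(x-1)-f(x+1)$), $S_t=e^{-tH}$. The control problem $(H,D)$ is $\dot f=-Hf+\mathbf 1_Du$, $f(0)=f_0\in\ell_2(X,m)$, where $\mathbf 1_D$ is extension by zero from $\ell_2(D,m|_D)$, with mild solution $f(t)=S_tf_0+\int_0^tS_{t-\tau}\mathbf 1_Du(\tau)d\tau$; it is $(\alpha,T,r,K)$-controllable if for every $f_0$ there is $u\in L_r((0,T);\ell_2(D,m|_D))$ with $\|u\|_{L_r((0,T);\ell_2(D,m|_D))}\le K\|f_0\|$ and $\|f(T)\|\le\alpha\|f_0\|$. *)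

theory Defs
  imports "HOL-Analysis.Analysis"
begin

definition l2 :: "(int \<Rightarrow> real) set" where
  "l2 = {f. (\<lambda>x. (f x)\<^sup>2) summable_on UNIV}"

definition l2norm :: "(int \<Rightarrow> real) \<Rightarrow> real" where
  "l2norm f = sqrt (infsum (\<lambda>x. (f x)\<^sup>2) UNIV)"

text \<open>The weighted Laplacian H for m = 1, b = nearest-neighbour weights on Z.\<close>
definition Hop :: "(int \<Rightarrow> real) \<Rightarrow> int \<Rightarrow> real" where
  "Hop f x = 2 * f x - f (x - 1) - f (x + 1)"

text \<open>S_t = exp(-tH) (H is bounded), evaluated coordinatewise from the norm-convergent
  exponential series.\<close>
definition S :: "real \<Rightarrow> (int \<Rightarrow> real) \<Rightarrow> int \<Rightarrow> real" where
  "S t f x = (\<Sum>n. (-t) ^ n / fact n * (Hop ^^ n) f x)"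

definition D :: "int set" where "D = {x. even x}"

definition extD :: "(int \<Rightarrow> real) \<Rightarrow> int \<Rightarrow> real" where
  "extD g x = (if x \<in> D then g x else 0)"

text \<open>Mild solution at time T, evaluated coordinatewise (evaluation at a point is a
  continuous linear functional, so it commutes with the Bochner integral).\<close>
definition mild :: "real \<Rightarrow> (int \<Rightarrow> real) \<Rightarrow> (real \<Rightarrow> int \<Rightarrow> real) \<Rightarrow> int \<Rightarrow> real" where
  "mild T f0 u x = S T f0 x + (LINT \<tau>:{0..T}|lborel. S (T - \<tau>) (extD (u \<tau>)) x)"

text \<open>u is a (strongly = weakly, by separability) measurable map (0,T) -> l2(D).\<close>
definition admissible :: "real \<Rightarrow> (real \<Rightarrow> int \<Rightarrow> real) \<Rightarrow> bool" where
  "admissible T u \<longleftrightarrow>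
     (\<forall>x. (\<lambda>t. u t x) \<in> borel_measurable (restrict_space lborel {0<..<T})) \<and>
     (AE t in lborel. t \<in> {0<..<T} \<longrightarrow> extD (u t) \<in> l2)"

text \<open>\<parallel>u\<parallel>_{L_r((0,T); l2(D))} \<le> C, for r \<in> [1,\<infinity>] (r = top means r = \<infinity>).\<close>
definition Lr_bound :: "real \<Rightarrow> ennreal \<Rightarrow> (real \<Rightarrow> int \<Rightarrow> real) \<Rightarrow> real \<Rightarrow> bool" where
  "Lr_bound T r u C \<longleftrightarrow>
     (if r = top then (AE t in lborel. t \<in> {0<..<T} \<longrightarrow> l2norm (extD (u t)) \<le> C)
      else (\<integral>\<^sup>+ t \<in> {0<..<T}. ennreal (l2norm (extD (u t)) powr enn2real r) \<partial>lborel)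
             \<le> ennreal (C powr enn2real r))"

definition controllable :: "real \<Rightarrow> real \<Rightarrow> ennreal \<Rightarrow> real \<Rightarrow> bool" where
  "controllable \<alpha> T r K \<longleftrightarrow>
     (\<forall>f0 \<in> l2. \<exists>u. admissible T u \<and> Lr_bound T r u (K * l2norm f0) \<and>
        mild T f0 u \<in> l2 \<and> l2norm (mild T f0 u) \<le> \<alpha> * l2norm f0)"

end

theory Submission
  imports Defs
begin

text \<open>
  Let \<open>\<chi>(4k+1) = 1\<close>, \<open>\<chi>(4k+3) = -1\<close> and \<open>\<chi> = 0\<close> on \<open>D = 2\<int>\<close>. Then \<open>H\<chi> = 2\<chi>\<close>, so
  formally \<open>\<langle>\<chi>, f(T)\<rangle> = exp(-2T) \<langle>\<chi>, f\<^sub>0\<rangle> + \<integral> exp(-2(T - \<tau>)) \<langle>\<chi>, 1\<^sub>D u(\<tau>)\<rangle> d\<tau>\<close>, and the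
  integral vanishes because \<open>\<chi> = 0\<close> on \<open>D\<close>: no control steers \<open>f\<^sub>0 = \<delta>\<^sub>1\<close> to \<open>0\<close>. Since \<open>\<chi>\<close> is
  not square summable, we pair instead with the truncations \<open>g\<^sub>N = \<chi> \<cdot> max 0 (N - |x|)\<close>, which
  satisfy \<open>|H g\<^sub>N - 2 g\<^sub>N| \<le> 2\<close> pointwise. The pairing of \<open>g\<^sub>N\<close> with \<open>S\<^sub>T \<delta>\<^sub>1\<close> is at least
  \<open>(N - 1) exp(-2T) - O(1)\<close>, whereas its pairing with the control term is \<open>O(sqrt N)\<close>: as \<open>g\<^sub>N\<close>
  vanishes on \<open>D\<close>, only the defect \<open>H\<^sup>n g\<^sub>N - 2\<^sup>n g\<^sub>N\<close> meets \<open>1\<^sub>D u\<close>, and Cauchy-Schwarz over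
  the support of \<open>g\<^sub>N\<close> costs \<open>sqrt N\<close>. For large \<open>N\<close> this contradicts \<open>f(T) = 0\<close>.
\<close>

section \<open>The Laplacian and its semigroup\<close>

lemma Hop_funpow_abs_le:
  assumes "\<And>y. \<bar>h y\<bar> \<le> B"
  shows "\<bar>(Hop ^^ n) h x\<bar> \<le> 4 ^ n * B"
proof (induction n arbitrary: x)
  case 0
  show ?case using assms by simp
next
  case (Suc n)
  have "\<bar>(Hop ^^ Suc n) h x\<bar> \<le>
      2 * \<bar>(Hop ^^ n) h x\<bar> + \<bar>(Hop ^^ n) h (x - 1)\<bar> + \<bar>(Hop ^^ n) h (x + 1)\<bar>"
    by (simp add: Hop_def)
  also have "\<dots> \<le> 4 ^ Suc n * B"
    using Suc[of x] Suc[of "x - 1"] Suc[of "x + 1"] by simp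
  finally show ?case .
qed

lemma Hop_funpow_support:
  assumes "\<And>y. M < \<bar>y\<bar> \<Longrightarrow> g y = 0" and "M + int n < \<bar>x\<bar>"
  shows "(Hop ^^ n) g x = 0"
  using assms(2)
proof (induction n arbitrary: x)
  case 0
  then show ?case using assms(1) by simp
next
  case (Suc n)
  then have "M + int n < \<bar>x\<bar>" "M + int n < \<bar>x - 1\<bar>" "M + int n < \<bar>x + 1\<bar>" by auto
  then show ?case using Suc.IH by (simp add: Hop_def)
qed

lemma sum_mult_shift:
  fixes a h :: "int \<Rightarrow> real"
  assumes "\<And>y. L - \<bar>k\<bar> < \<bar>y\<bar> \<Longrightarrow> a y = 0"
  shows "(\<Sum>x\<in>{-L..L}. a x * h (x + k)) = (\<Sum>x\<in>{-L..L}. a (x - k) * h x)"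
proof -
  let ?S = "{-(L - \<bar>k\<bar>)..L - \<bar>k\<bar>}"
  have "(\<Sum>x\<in>{-L..L}. a x * h (x + k)) = (\<Sum>x\<in>?S. a x * h (x + k))"
    by (rule sum.mono_neutral_right) (use assms in auto)
  also have "\<dots> = (\<Sum>x\<in>(\<lambda>x. x + k) ` ?S. a (x - k) * h x)"
    by (subst sum.reindex) (auto simp: inj_on_def)
  also have "\<dots> = (\<Sum>x\<in>{-L..L}. a (x - k) * h x)"
    by (rule sum.mono_neutral_left) (use assms in auto)
  finally show ?thesis .
qed

lemma sum_mult_Hop_swap:
  fixes a h :: "int \<Rightarrow> real"
  assumes "\<And>y. L \<le> \<bar>y\<bar> \<Longrightarrow> a y = 0"
  shows "(\<Sum>x\<in>{-L..L}. a x * Hop h x) = (\<Sum>x\<in>{-L..L}. Hop a x * h x)"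
proof -
  have shift: "(\<Sum>x\<in>{-L..L}. a x * h (x + k)) = (\<Sum>x\<in>{-L..L}. a (x - k) * h x)"
    if "\<bar>k\<bar> = 1" for k
    by (rule sum_mult_shift) (use assms that in auto)
  from shift[of 1] shift[of "-1"] show ?thesis
    by (simp add: Hop_def algebra_simps sum_subtractf sum.distrib sum_distrib_left)
qed

lemma sum_mult_Hop_funpow_swap:
  fixes g h :: "int \<Rightarrow> real"
  assumes "\<And>y. M < \<bar>y\<bar> \<Longrightarrow> g y = 0" and "M + int n \<le> L"
  shows "(\<Sum>x\<in>{-L..L}. g x * (Hop ^^ n) h x) = (\<Sum>x\<in>{-L..L}. (Hop ^^ n) g x * h x)"
  using assms(2)
proof (induction n arbitrary: h)
  case 0
  show ?case by simp
next
  case (Suc n)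
  have "(\<Sum>x\<in>{-L..L}. g x * (Hop ^^ Suc n) h x) = (\<Sum>x\<in>{-L..L}. (Hop ^^ n) g x * Hop h x)"
    using Suc by (simp add: funpow_Suc_right del: funpow.simps)
  also have "\<dots> = (\<Sum>x\<in>{-L..L}. Hop ((Hop ^^ n) g) x * h x)"
    by (rule sum_mult_Hop_swap) (use Hop_funpow_support[OF assms(1)] Suc.prems in auto)
  finally show ?case by simp
qed

lemma Hop_funpow_approx_eigen:
  assumes "\<And>x. \<bar>Hop g x - 2 * g x\<bar> \<le> E"
  shows "\<bar>(Hop ^^ n) g x - 2 ^ n * g x\<bar> \<le> E * 5 ^ n"
proof (induction n arbitrary: x)
  case 0
  show ?case using assms[of x] by simp
next
  case (Suc n)
  define e where "e y = (Hop ^^ n) g y - 2 ^ n * g y" for y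
  have e: "\<bar>e y\<bar> \<le> E * 5 ^ n" for y using Suc by (simp add: e_def)
  have "\<bar>2 ^ n * (Hop g x - 2 * g x)\<bar> \<le> 5 ^ n * E"
    using assms[of x] power_mono[of "2::real" 5 n]
    by (simp add: abs_mult mult_mono')
  moreover have "(Hop ^^ Suc n) g x - 2 ^ Suc n * g x =
      (2 * e x - e (x - 1) - e (x + 1)) + 2 ^ n * (Hop g x - 2 * g x)"
    by (simp add: e_def Hop_def algebra_simps)
  ultimately have "\<bar>(Hop ^^ Suc n) g x - 2 ^ Suc n * g x\<bar> \<le> 5 * (E * 5 ^ n)"
    using e[of x] e[of "x - 1"] e[of "x + 1"] by (simp only: abs_le_iff mult.commute) linarith
  then show ?case by simp
qed

lemma exp_sums_real: "(\<lambda>n. x ^ n / fact n) sums exp (x::real)"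
  using exp_converges[of x] by (simp add: divide_inverse mult.commute)

lemma abs_suminf_le_exp:
  fixes a :: "nat \<Rightarrow> real"
  assumes "\<And>n. \<bar>a n\<bar> \<le> C * (z ^ n / fact n)"
  shows "summable a" and "\<bar>suminf a\<bar> \<le> C * exp z"
proof -
  have exp: "(\<lambda>n. C * (z ^ n / fact n)) sums (C * exp z)"
    by (rule sums_mult[OF exp_sums_real])
  have abs: "summable (\<lambda>n. \<bar>a n\<bar>)"
    by (rule summable_comparison_test[OF _ sums_summable[OF exp]]) (use assms in auto)
  then show "summable a" by (rule summable_rabs_cancel)
  have "\<bar>suminf a\<bar> \<le> (\<Sum>n. \<bar>a n\<bar>)" by (rule summable_rabs[OF abs])
  also have "\<dots> \<le> C * exp z"
    using suminf_le[OF assms abs sums_summable[OF exp]] sums_unique[OF exp] by simp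
  finally show "\<bar>suminf a\<bar> \<le> C * exp z" .
qed

lemma S_summable_abs_le:
  assumes "\<And>y. \<bar>h y\<bar> \<le> B"
  shows "summable (\<lambda>n. (-s) ^ n / fact n * (Hop ^^ n) h x)"
    and "\<bar>S s h x\<bar> \<le> B * exp (4 * \<bar>s\<bar>)"
proof -
  have "\<bar>(-s) ^ n / fact n * (Hop ^^ n) h x\<bar> \<le> B * ((4 * \<bar>s\<bar>) ^ n / fact n)" for n
  proof -
    have "\<bar>(-s) ^ n / fact n * (Hop ^^ n) h x\<bar> = \<bar>s\<bar> ^ n / fact n * \<bar>(Hop ^^ n) h x\<bar>"
      by (simp add: abs_mult power_abs)
    also have "\<dots> \<le> \<bar>s\<bar> ^ n / fact n * (4 ^ n * B)"
      by (rule mult_left_mono[OF Hop_funpow_abs_le[OF assms]]) simp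
    also have "\<dots> = B * ((4 * \<bar>s\<bar>) ^ n / fact n)" by (simp add: power_mult_distrib)
    finally show ?thesis .
  qed
  from abs_suminf_le_exp[OF this]
  show "summable (\<lambda>n. (-s) ^ n / fact n * (Hop ^^ n) h x)" "\<bar>S s h x\<bar> \<le> B * exp (4 * \<bar>s\<bar>)"
    by (simp_all add: S_def)
qed

lemma sum_mult_S_eq_suminf:
  fixes g h :: "int \<Rightarrow> real"
  assumes h: "\<And>y. \<bar>h y\<bar> \<le> B" and g: "\<And>y. M < \<bar>y\<bar> \<Longrightarrow> g y = 0"
  shows "(\<Sum>x\<in>{-M..M}. g x * S s h x) =
    (\<Sum>n. (-s) ^ n / fact n * (\<Sum>y\<in>{-(M + int n)..M + int n}. (Hop ^^ n) g y * h y))"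
proof -
  note summable = S_summable_abs_le(1)[OF h]
  have "(\<Sum>x\<in>{-M..M}. g x * S s h x) =
      (\<Sum>x\<in>{-M..M}. \<Sum>n. g x * ((-s) ^ n / fact n * (Hop ^^ n) h x))"
    unfolding S_def by (intro sum.cong refl suminf_mult[symmetric] summable)
  also have "\<dots> = (\<Sum>n. \<Sum>x\<in>{-M..M}. g x * ((-s) ^ n / fact n * (Hop ^^ n) h x))"
    by (rule suminf_sum[symmetric]) (intro summable_mult summable)
  also have "\<dots> = (\<Sum>n. (-s) ^ n / fact n * (\<Sum>y\<in>{-(M + int n)..M + int n}. (Hop ^^ n) g y * h y))"
  proof (rule suminf_cong)
    fix n
    have "(\<Sum>x\<in>{-M..M}. g x * ((-s) ^ n / fact n * (Hop ^^ n) h x)) =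
        (-s) ^ n / fact n * (\<Sum>x\<in>{-M..M}. g x * (Hop ^^ n) h x)"
      by (simp add: sum_distrib_left algebra_simps)
    also have "(\<Sum>x\<in>{-M..M}. g x * (Hop ^^ n) h x) =
        (\<Sum>x\<in>{-(M + int n)..M + int n}. g x * (Hop ^^ n) h x)"
      by (rule sum.mono_neutral_left) (auto simp: g)
    also have "\<dots> = (\<Sum>y\<in>{-(M + int n)..M + int n}. (Hop ^^ n) g y * h y)"
      by (rule sum_mult_Hop_funpow_swap) (auto simp: g)
    finally show "(\<Sum>x\<in>{-M..M}. g x * ((-s) ^ n / fact n * (Hop ^^ n) h x)) =
        (-s) ^ n / fact n * (\<Sum>y\<in>{-(M + int n)..M + int n}. (Hop ^^ n) g y * h y)" .
  qed
  finally show ?thesis .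
qed

section \<open>Square-summable functions\<close>

lemma l2norm_nonneg: "0 \<le> l2norm f"
  unfolding l2norm_def using infsum_nonneg[of UNIV "\<lambda>x. (f x)\<^sup>2"] by simp

lemma sum_power2_le_l2norm:
  assumes "f \<in> l2" and "finite A"
  shows "(\<Sum>y\<in>A. (f y)\<^sup>2) \<le> (l2norm f)\<^sup>2"
proof -
  have "(\<Sum>y\<in>A. (f y)\<^sup>2) = infsum (\<lambda>x. (f x)\<^sup>2) A" using assms(2) by simp
  also have "\<dots> \<le> infsum (\<lambda>x. (f x)\<^sup>2) UNIV"
    by (rule infsum_mono_neutral) (use assms in \<open>auto simp: l2_def\<close>)
  also have "\<dots> = (l2norm f)\<^sup>2"
    unfolding l2norm_def using infsum_nonneg[of UNIV "\<lambda>x. (f x)\<^sup>2"] by simp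
  finally show ?thesis .
qed

lemma abs_le_l2norm:
  assumes "f \<in> l2"
  shows "\<bar>f y\<bar> \<le> l2norm f"
proof -
  have "(f y)\<^sup>2 \<le> (l2norm f)\<^sup>2" using sum_power2_le_l2norm[OF assms, of "{y}"] by simp
  then show ?thesis using power2_le_imp_le[of "\<bar>f y\<bar>" "l2norm f"] l2norm_nonneg[of f] by simp
qed

lemma sum_abs_le_sqrt_card_l2norm:
  assumes "f \<in> l2" and "finite A"
  shows "(\<Sum>y\<in>A. \<bar>f y\<bar>) \<le> sqrt (card A) * l2norm f"
proof -
  have L2: "L2_set f A \<le> l2norm f"
    unfolding L2_set_def using sum_power2_le_l2norm[OF assms] l2norm_nonneg[of f]
    by (simp add: real_le_lsqrt)
  have "(\<Sum>y\<in>A. \<bar>f y\<bar>) \<le> L2_set (\<lambda>_. 1) A * L2_set f A"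
    using L2_set_mult_ineq[where f="\<lambda>_. 1" and g=f and A=A] by simp
  also have "\<dots> \<le> sqrt (card A) * l2norm f"
    using L2 by (simp add: L2_set_constant mult_left_mono)
  finally show ?thesis .
qed

lemma indicator_singleton_l2: "(indicator {a} :: int \<Rightarrow> real) \<in> l2"
  and l2norm_indicator_singleton: "l2norm (indicator {a} :: int \<Rightarrow> real) = 1"
proof -
  have sum: "((\<lambda>x. (indicator {a} x :: real)\<^sup>2) has_sum 1) UNIV"
    by (rule has_sum_finite_neutralI[where B="{a}"]) auto
  then show "(indicator {a} :: int \<Rightarrow> real) \<in> l2"
    unfolding l2_def summable_on_def by blast
  show "l2norm (indicator {a} :: int \<Rightarrow> real) = 1"
    unfolding l2norm_def using infsumI[OF sum] by simp
qed

section \<open>Test functions\<close>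

definition odd_alternating :: "int \<Rightarrow> real" where
  "odd_alternating x = (if x mod 4 = 1 then 1 else if x mod 4 = 3 then -1 else 0)"

definition test_fn :: "nat \<Rightarrow> int \<Rightarrow> real" where
  "test_fn N x = odd_alternating x * max 0 (real N - \<bar>real_of_int x\<bar>)"

lemma test_fn_support: "int N < \<bar>x\<bar> \<Longrightarrow> test_fn N x = 0"
  by (simp add: test_fn_def)

lemma test_fn_even: "even x \<Longrightarrow> test_fn N x = 0"
proof -
  assume "even x"
  then have "x mod 4 \<noteq> 1 \<and> x mod 4 \<noteq> 3" by presburger
  then show ?thesis by (simp add: test_fn_def odd_alternating_def)
qed

lemma test_fn_one: "1 \<le> N \<Longrightarrow> test_fn N 1 = real N - 1"
  by (simp add: test_fn_def odd_alternating_def)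

lemma Hop_test_fn_approx_eigen: "\<bar>Hop (test_fn N) x - 2 * test_fn N x\<bar> \<le> 2"
proof (cases "even x")
  case False
  then show ?thesis by (simp add: Hop_def test_fn_even)
next
  case True
  let ?tent = "\<lambda>y::int. max 0 (real N - \<bar>real_of_int y\<bar>)"
  have "(x - 1) mod 4 = 1 \<and> (x + 1) mod 4 = 3 \<or> (x - 1) mod 4 = 3 \<and> (x + 1) mod 4 = 1"
    using True by presburger
  then have sign: "odd_alternating (x - 1) = - odd_alternating (x + 1)"
    and unit: "\<bar>odd_alternating (x + 1)\<bar> = 1"
    by (auto simp: odd_alternating_def)
  have "Hop (test_fn N) x - 2 * test_fn N x =
      - odd_alternating (x + 1) * (?tent (x + 1) - ?tent (x - 1))"
    using sign True test_fn_even[of x N] by (simp add: Hop_def test_fn_def algebra_simps)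
  also have "\<bar>\<dots>\<bar> \<le> 2"
    unfolding abs_mult abs_minus_cancel unit by (simp add: abs_if max_def)
  finally show ?thesis .
qed

lemma Hop_funpow_test_fn_approx:
  "\<bar>(Hop ^^ n) (test_fn N) x - 2 ^ n * test_fn N x\<bar> \<le> 2 * 5 ^ n"
  using Hop_funpow_approx_eigen[OF Hop_test_fn_approx_eigen] by (simp add: mult.commute)

lemma sum_test_fn_S_indicator_ge:
  assumes N: "1 \<le> N" and T: "0 \<le> T"
  shows "(real N - 1) * exp (-2 * T) - 2 * exp (5 * T) \<le>
    (\<Sum>x\<in>{-int N..int N}. test_fn N x * S T (indicator {1}) x)"
proof -
  define e where "e n = (Hop ^^ n) (test_fn N) 1 - 2 ^ n * test_fn N 1" for n
  have "(\<Sum>y\<in>{-(int N + int n)..int N + int n}. (Hop ^^ n) (test_fn N) y * indicator {1} y) =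
      (Hop ^^ n) (test_fn N) 1" for n
    using N by (simp add: indicator_def if_distrib sum.delta cong: if_cong)
  then have "(\<Sum>x\<in>{-int N..int N}. test_fn N x * S T (indicator {1}) x) =
      (\<Sum>n. (-T) ^ n / fact n * (2 ^ n * test_fn N 1) + (-T) ^ n / fact n * e n)"
    using sum_mult_S_eq_suminf[of "indicator {1}" 1 "int N" "test_fn N" T]
    by (simp add: test_fn_support e_def algebra_simps)
  moreover have main:
    "(\<lambda>n. (-T) ^ n / fact n * (2 ^ n * test_fn N 1)) sums ((real N - 1) * exp (-2 * T))"
  proof -
    have "(-T) ^ n / fact n * (2 ^ n * test_fn N 1) = (real N - 1) * ((-2 * T) ^ n / fact n)" for n
    proof -
      have "(-2 * T) ^ n = 2 ^ n * (-T) ^ n"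
        by (metis mult_minus_left mult_minus_right power_mult_distrib)
      then show ?thesis by (simp add: test_fn_one[OF N])
    qed
    then show ?thesis using sums_mult[OF exp_sums_real, of "real N - 1"] by simp
  qed
  moreover have "\<bar>(-T) ^ n / fact n * e n\<bar> \<le> 2 * ((5 * T) ^ n / fact n)" for n
  proof -
    have "\<bar>(-T) ^ n / fact n * e n\<bar> = T ^ n / fact n * \<bar>e n\<bar>"
      using T by (simp add: abs_mult power_abs)
    also have "\<dots> \<le> T ^ n / fact n * (2 * 5 ^ n)"
      using Hop_funpow_test_fn_approx[of n N 1] T
      by (intro mult_left_mono) (auto simp: e_def)
    also have "\<dots> = 2 * ((5 * T) ^ n / fact n)" by (simp add: power_mult_distrib)
    finally show ?thesis .
  qed
  note error = abs_suminf_le_exp[OF this]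
  ultimately show ?thesis
    using suminf_add[OF sums_summable[OF main] error(1)] sums_unique[OF main] error(2)
    by (simp add: abs_le_iff)
qed

lemma sqrt_card_window_le:
  "sqrt (card {-(int N + int n)..int N + int n}) \<le> sqrt (2 * real N + 1) * 2 ^ n"
proof -
  have "1 + 2 * real n \<le> 4 ^ n"
    by (induction n) simp_all
  then have "2 * real N + 1 + 2 * real n \<le> (2 * real N + 1) * 4 ^ n"
    using mult_left_mono[of 1 "4 ^ n" "real N"] by (simp add: algebra_simps)
  also have "\<dots> = (sqrt (2 * real N + 1) * 2 ^ n)\<^sup>2"
    by (simp add: power_mult_distrib power_mult[symmetric] mult.commute[of n 2] power_mult)
  finally show ?thesis by (simp add: real_le_lsqrt)
qed

lemma abs_sum_Hop_funpow_test_fn_le: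
  assumes h: "h \<in> l2" and odd: "\<And>y. odd y \<Longrightarrow> h y = 0"
  shows "\<bar>\<Sum>y\<in>{-(int N + int n)..int N + int n}. (Hop ^^ n) (test_fn N) y * h y\<bar>
    \<le> 2 * sqrt (2 * real N + 1) * l2norm h * 10 ^ n"
proof -
  let ?W = "{-(int N + int n)..int N + int n}"
  have disjoint: "test_fn N y * h y = 0" for y
    by (cases "even y") (simp_all add: test_fn_even odd)
  have window: "(\<Sum>y\<in>?W. \<bar>h y\<bar>) \<le> sqrt (2 * real N + 1) * 2 ^ n * l2norm h"
    by (rule order_trans[OF sum_abs_le_sqrt_card_l2norm[OF h]
          mult_right_mono[OF sqrt_card_window_le l2norm_nonneg]]) simp
  have "(\<Sum>y\<in>?W. (Hop ^^ n) (test_fn N) y * h y) =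
      (\<Sum>y\<in>?W. ((Hop ^^ n) (test_fn N) y - 2 ^ n * test_fn N y) * h y)"
    by (intro sum.cong refl) (simp add: left_diff_distrib mult.assoc disjoint)
  also have "\<bar>\<dots>\<bar> \<le> (\<Sum>y\<in>?W. 2 * 5 ^ n * \<bar>h y\<bar>)"
    by (rule order_trans[OF sum_abs sum_mono])
      (simp add: abs_mult mult_right_mono Hop_funpow_test_fn_approx)
  also have "\<dots> = 2 * 5 ^ n * (\<Sum>y\<in>?W. \<bar>h y\<bar>)"
    by (simp add: sum_distrib_left)
  also have "\<dots> \<le> 2 * 5 ^ n * (sqrt (2 * real N + 1) * 2 ^ n * l2norm h)"
    using window by (intro mult_left_mono) simp_all
  also have "\<dots> = 2 * sqrt (2 * real N + 1) * l2norm h * 10 ^ n"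
    using power_mult_distrib[of "5::real" 2 n] by (simp add: algebra_simps)
  finally show ?thesis .
qed

lemma abs_sum_test_fn_S_le:
  assumes h: "h \<in> l2" and odd: "\<And>y. odd y \<Longrightarrow> h y = 0"
  shows "\<bar>\<Sum>x\<in>{-int N..int N}. test_fn N x * S s h x\<bar>
    \<le> 2 * sqrt (2 * real N + 1) * l2norm h * exp (10 * \<bar>s\<bar>)"
proof -
  let ?c = "2 * sqrt (2 * real N + 1) * l2norm h"
  have "\<bar>(-s) ^ n / fact n * (\<Sum>y\<in>{-(int N + int n)..int N + int n}. (Hop ^^ n) (test_fn N) y * h y)\<bar>
      \<le> ?c * ((10 * \<bar>s\<bar>) ^ n / fact n)" for n
  proof -
    have "\<bar>s\<bar> ^ n / fact n * \<bar>\<Sum>y\<in>{-(int N + int n)..int N + int n}. (Hop ^^ n) (test_fn N) y * h y\<bar>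
        \<le> \<bar>s\<bar> ^ n / fact n * (?c * 10 ^ n)"
      by (rule mult_left_mono[OF abs_sum_Hop_funpow_test_fn_le[OF h odd]]) auto
    then show ?thesis by (simp add: abs_mult power_abs power_mult_distrib algebra_simps)
  qed
  from abs_suminf_le_exp(2)[OF this]
  show ?thesis
    using sum_mult_S_eq_suminf[OF abs_le_l2norm[OF h], of "int N" "test_fn N" s]
    by (simp add: test_fn_support)
qed

section \<open>Integrals against controls\<close>

text \<open>
  A crude bound for the integral of \<open>\<parallel>u(t)\<parallel>\<close> over \<open>(0, T)\<close> when \<open>\<parallel>u\<parallel>\<^sub>L\<^sub>r \<le> K\<close>,
  obtained from \<open>x \<le> 1 + x\<^sup>r\<close> instead of Hoelder's inequality: only its finiteness matters.
\<close>
definition control_L1_bound :: "real \<Rightarrow> ennreal \<Rightarrow> real \<Rightarrow> real" where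
  "control_L1_bound T r K = (if r = top then K * T else T + K powr enn2real r)"

lemma control_L1_bound_nonneg: "0 < T \<Longrightarrow> 0 \<le> K \<Longrightarrow> 0 \<le> control_L1_bound T r K"
  by (simp add: control_L1_bound_def)

lemma le_one_plus_powr:
  fixes x p :: real
  assumes "0 \<le> x" and "1 \<le> p"
  shows "x \<le> 1 + x powr p"
proof (cases "x \<le> 1")
  case True
  then show ?thesis by (smt (verit) powr_ge_zero)
next
  case False
  then have "x powr 1 \<le> x powr p" using assms by (intro powr_mono) auto
  then show ?thesis using False by simp
qed

lemma nn_integral_le_control_L1_bound:
  fixes G :: "real \<Rightarrow> real"
  assumes T: "0 < T" and r: "1 \<le> r" and K: "0 \<le> K" and Lr: "Lr_bound T r u K"
    and G: "G \<in> borel_measurable (restrict_space lborel {0<..<T})"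
    and bound: "AE t in lborel. t \<in> {0<..<T} \<longrightarrow> \<bar>G t\<bar> \<le> l2norm (extD (u t))"
  shows "(\<integral>\<^sup>+t. ennreal \<bar>G t\<bar> \<partial>restrict_space lborel {0<..<T}) \<le> ennreal (control_L1_bound T r K)"
proof -
  let ?R = "restrict_space lborel {0<..<T}"
  have sets: "{0<..<T} \<inter> space lborel \<in> sets lborel" by simp
  have bound: "AE t in ?R. \<bar>G t\<bar> \<le> l2norm (extD (u t))"
    using bound by (simp add: AE_restrict_space_iff[OF sets])
  have measure: "emeasure ?R (space ?R) = ennreal T"
    using T by (simp add: emeasure_restrict_space[OF sets] space_restrict_space)
  show ?thesis
  proof (cases "r = top")
    case True
    then have "AE t in ?R. l2norm (extD (u t)) \<le> K"
      using Lr by (simp add: Lr_bound_def AE_restrict_space_iff[OF sets])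
    with bound have "AE t in ?R. ennreal \<bar>G t\<bar> \<le> ennreal K"
      by eventually_elim (simp add: ennreal_leI)
    then have "(\<integral>\<^sup>+t. ennreal \<bar>G t\<bar> \<partial>?R) \<le> (\<integral>\<^sup>+t. ennreal K \<partial>?R)"
      by (rule nn_integral_mono_AE)
    also have "\<dots> = ennreal (control_L1_bound T r K)"
      using True K T measure by (simp add: control_L1_bound_def ennreal_mult)
    finally show ?thesis .
  next
    case False
    define p where "p = enn2real r"
    have p: "1 \<le> p"
      unfolding p_def using enn2real_mono[OF r] False by (simp add: top.not_eq_extremum)
    have "(\<integral>\<^sup>+t. ennreal \<bar>G t\<bar> \<partial>?R) \<le> (\<integral>\<^sup>+t. 1 + ennreal (\<bar>G t\<bar> powr p) \<partial>?R)"
      using le_one_plus_powr[OF abs_ge_zero p]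
      by (intro nn_integral_mono) (metis ennreal_leI ennreal_plus ennreal_1 zero_le_one powr_ge_zero)
    also have "\<dots> = (\<integral>\<^sup>+t. 1 \<partial>?R) + (\<integral>\<^sup>+t. ennreal (\<bar>G t\<bar> powr p) \<partial>?R)"
      by (rule nn_integral_add) (use G in auto)
    also have "(\<integral>\<^sup>+t. ennreal (\<bar>G t\<bar> powr p) \<partial>?R) \<le>
        (\<integral>\<^sup>+t. ennreal (l2norm (extD (u t)) powr p) \<partial>?R)"
      using bound by (intro nn_integral_mono_AE, eventually_elim)
        (intro ennreal_leI powr_mono2, use p in auto)
    also have "\<dots> \<le> ennreal (K powr p)"
      using Lr False unfolding Lr_bound_def p_def by (simp add: nn_integral_restrict_space[OF sets])
    finally show ?thesis
      using False T K measure by (simp add: control_L1_bound_def p_def add_mono)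
  qed
qed

lemma integrable_dominated_by_control:
  fixes G :: "real \<Rightarrow> real"
  assumes T: "0 < T" and r: "1 \<le> r" and K: "0 \<le> K" and Lr: "Lr_bound T r u K"
    and G: "G \<in> borel_measurable (restrict_space lborel {0<..<T})" and c: "0 < c"
    and bound: "AE t in lborel. t \<in> {0<..<T} \<longrightarrow> \<bar>G t\<bar> \<le> c * l2norm (extD (u t))"
  shows "integrable (restrict_space lborel {0<..<T}) G"
    and "\<bar>integral\<^sup>L (restrict_space lborel {0<..<T}) G\<bar> \<le> c * control_L1_bound T r K"
proof -
  let ?R = "restrict_space lborel {0<..<T}"
  have G': "(\<lambda>t. G t / c) \<in> borel_measurable ?R" using G by measurable
  have "AE t in lborel. t \<in> {0<..<T} \<longrightarrow> \<bar>G t / c\<bar> \<le> l2norm (extD (u t))"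
    using bound by eventually_elim (use c in \<open>auto simp: field_simps\<close>)
  note scaled = nn_integral_le_control_L1_bound[OF T r K Lr G' this]
  have "(\<integral>\<^sup>+t. ennreal \<bar>G t\<bar> \<partial>?R) = (\<integral>\<^sup>+t. ennreal c * ennreal \<bar>G t / c\<bar> \<partial>?R)"
    using c by (intro nn_integral_cong) (simp add: ennreal_mult[symmetric] abs_divide)
  also have "\<dots> = ennreal c * (\<integral>\<^sup>+t. ennreal \<bar>G t / c\<bar> \<partial>?R)"
    by (rule nn_integral_cmult) (use G' in measurable)
  also have "\<dots> \<le> ennreal (c * control_L1_bound T r K)"
    using mult_left_mono[OF scaled] c control_L1_bound_nonneg[OF T K] by (simp add: ennreal_mult)
  finally have nn: "(\<integral>\<^sup>+t. ennreal \<bar>G t\<bar> \<partial>?R) \<le> ennreal (c * control_L1_bound T r K)" .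
  then show integrable: "integrable ?R G"
    unfolding integrable_iff_bounded using G by (simp add: le_less_trans)
  have "\<bar>integral\<^sup>L ?R G\<bar> \<le> integral\<^sup>L ?R (\<lambda>t. \<bar>G t\<bar>)"
    by (rule integral_abs_bound)
  also have "\<dots> = enn2real (\<integral>\<^sup>+t. ennreal \<bar>G t\<bar> \<partial>?R)"
    by (rule integral_eq_nn_integral) (use G in auto)
  also have "\<dots> \<le> c * control_L1_bound T r K"
    by (rule enn2real_leI[OF _ nn]) (use c control_L1_bound_nonneg[OF T K] in simp)
  finally show "\<bar>integral\<^sup>L ?R G\<bar> \<le> c * control_L1_bound T r K" .
qed

lemma set_integral_Icc_eq_restrict_Ioo:
  fixes F :: "real \<Rightarrow> real"
  assumes ab: "a < b" and F: "F \<in> borel_measurable (restrict_space lborel {a<..<b})"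
  shows "(LINT t:{a..b}|lborel. F t) = integral\<^sup>L (restrict_space lborel {a<..<b}) F"
proof -
  have sets: "{a<..<b} \<inter> space lborel \<in> sets lborel" by simp
  have open_meas: "(\<lambda>t. indicator {a<..<b} t *\<^sub>R F t) \<in> borel_measurable lborel"
    using F borel_measurable_restrict_space_iff[OF sets, of F] by simp
  have endpoints: "indicator {a..b} t *\<^sub>R F t =
      indicator {a<..<b} t *\<^sub>R F t + indicator {a} t * F a + indicator {b} t * F b" for t
    using ab by (auto split: split_indicator)
  have closed_meas: "(\<lambda>t. indicator {a..b} t *\<^sub>R F t) \<in> borel_measurable lborel"
    unfolding endpoints using open_meas by measurable
  have "AE t in lborel. t \<notin> {a, b}"
    by (rule AE_not_in) (simp add: finite_imp_null_set_lborel)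
  then have "(LINT t:{a..b}|lborel. F t) = integral\<^sup>L lborel (\<lambda>t. indicator {a<..<b} t *\<^sub>R F t)"
    unfolding set_lebesgue_integral_def
    by (intro integral_cong_AE[OF closed_meas open_meas], eventually_elim)
      (auto split: split_indicator)
  also have "\<dots> = integral\<^sup>L (restrict_space lborel {a<..<b}) F"
    by (rule integral_restrict_space[OF sets, symmetric])
  finally show ?thesis .
qed

lemma measurable_Hop_funpow:
  assumes "\<And>y. (\<lambda>t. h t y) \<in> borel_measurable M"
  shows "(\<lambda>t. (Hop ^^ n) (h t) x) \<in> borel_measurable M"
proof (induction n arbitrary: x)
  case 0
  show ?case using assms by simp
next
  case (Suc n)
  then show ?case by (simp add: Hop_def)
qed

lemma measurable_S:
  assumes "\<And>y. (\<lambda>t. h t y) \<in> borel_measurable M" and "s \<in> borel_measurable M"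
  shows "(\<lambda>t. S (s t) (h t) x) \<in> borel_measurable M"
  unfolding S_def
proof (rule borel_measurable_suminf)
  fix n
  show "(\<lambda>t. (- s t) ^ n / fact n * (Hop ^^ n) (h t) x) \<in> borel_measurable M"
    using measurable_Hop_funpow[where h=h, OF assms(1)] assms(2) by measurable
qed

lemma measurable_S_control:
  assumes "admissible T u"
  shows "(\<lambda>t. S (T - t) (extD (u t)) x) \<in> borel_measurable (restrict_space lborel {0<..<T})"
proof (rule measurable_S)
  show "(\<lambda>t. extD (u t) y) \<in> borel_measurable (restrict_space lborel {0<..<T})" for y
    using assms by (cases "y \<in> D") (simp_all add: admissible_def extD_def)
  show "(\<lambda>t. T - t) \<in> borel_measurable (restrict_space lborel {0<..<T})"
    by (rule measurable_restrict_space1) simp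
qed

lemma integrable_S_control:
  assumes T: "0 < T" and r: "1 \<le> r" and K: "0 \<le> K"
    and adm: "admissible T u" and Lr: "Lr_bound T r u K"
  shows "integrable (restrict_space lborel {0<..<T}) (\<lambda>t. S (T - t) (extD (u t)) x)"
proof (rule integrable_dominated_by_control(1)[OF T r K Lr measurable_S_control[OF adm] exp_gt_zero])
  have "AE t in lborel. t \<in> {0<..<T} \<longrightarrow> extD (u t) \<in> l2"
    using adm by (simp add: admissible_def)
  then show "AE t in lborel. t \<in> {0<..<T} \<longrightarrow>
      \<bar>S (T - t) (extD (u t)) x\<bar> \<le> exp (4 * T) * l2norm (extD (u t))"
  proof eventually_elim
    case (elim t)
    show ?case
    proof
      assume t: "t \<in> {0<..<T}"
      then have "\<bar>S (T - t) (extD (u t)) x\<bar> \<le> l2norm (extD (u t)) * exp (4 * \<bar>T - t\<bar>)"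
        using elim by (intro S_summable_abs_le(2) abs_le_l2norm) auto
      also have "\<dots> \<le> l2norm (extD (u t)) * exp (4 * T)"
        using t by (intro mult_left_mono l2norm_nonneg) auto
      finally show "\<bar>S (T - t) (extD (u t)) x\<bar> \<le> exp (4 * T) * l2norm (extD (u t))"
        by (simp add: mult.commute)
    qed
  qed
qed

lemma abs_sum_test_fn_control_term_le:
  assumes T: "0 < T" and r: "1 \<le> r" and K: "0 \<le> K"
    and adm: "admissible T u" and Lr: "Lr_bound T r u K"
  shows "\<bar>\<Sum>x\<in>{-int N..int N}. test_fn N x * (LINT \<tau>:{0..T}|lborel. S (T - \<tau>) (extD (u \<tau>)) x)\<bar>
    \<le> 2 * sqrt (2 * real N + 1) * exp (10 * T) * control_L1_bound T r K"
proof -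
  let ?R = "restrict_space lborel {0<..<T}"
  define G where "G t = (\<Sum>x\<in>{-int N..int N}. test_fn N x * S (T - t) (extD (u t)) x)" for t
  have "(\<Sum>x\<in>{-int N..int N}. test_fn N x * (LINT \<tau>:{0..T}|lborel. S (T - \<tau>) (extD (u \<tau>)) x)) =
      integral\<^sup>L ?R G"
    using integrable_S_control[OF assms] unfolding G_def
    by (simp add: set_integral_Icc_eq_restrict_Ioo[OF T measurable_S_control[OF adm]]
        Bochner_Integration.integral_sum)
  moreover have "G \<in> borel_measurable ?R"
    unfolding G_def using measurable_S_control[OF adm] by measurable
  moreover have "AE t in lborel. extD (u t) \<in> l2 \<longrightarrow> t \<in> {0<..<T} \<longrightarrow>
      \<bar>G t\<bar> \<le> 2 * sqrt (2 * real N + 1) * exp (10 * T) * l2norm (extD (u t))"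
  proof (intro AE_I2 impI)
    fix t
    assume l2: "extD (u t) \<in> l2" and t: "t \<in> {0<..<T}"
    have "\<bar>G t\<bar> \<le> 2 * sqrt (2 * real N + 1) * l2norm (extD (u t)) * exp (10 * \<bar>T - t\<bar>)"
      unfolding G_def using l2 by (intro abs_sum_test_fn_S_le) (auto simp: extD_def D_def)
    also have "\<dots> \<le> 2 * sqrt (2 * real N + 1) * l2norm (extD (u t)) * exp (10 * T)"
      using t by (intro mult_left_mono mult_nonneg_nonneg l2norm_nonneg) auto
    finally show "\<bar>G t\<bar> \<le> 2 * sqrt (2 * real N + 1) * exp (10 * T) * l2norm (extD (u t))"
      by (simp add: algebra_simps)
  qed
  with adm have "AE t in lborel. t \<in> {0<..<T} \<longrightarrow>
      \<bar>G t\<bar> \<le> 2 * sqrt (2 * real N + 1) * exp (10 * T) * l2norm (extD (u t))"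
    unfolding admissible_def by (auto elim: AE_mp)
  ultimately show ?thesis
    using integrable_dominated_by_control(2)[OF T r K Lr] by simp
qed

lemma exists_nat_sqrt_dominated:
  fixes a b c :: real
  assumes c: "0 < c"
  shows "\<exists>N::nat. 1 \<le> N \<and> a + b * sqrt (2 * real N + 1) < (real N - 1) * c"
proof -
  define m where "m = (\<bar>a\<bar> + 2 * \<bar>b\<bar>) / c + 2"
  define N where "N = nat \<lceil>m\<^sup>2\<rceil>"
  define s where "s = sqrt (real N)"
  have "m\<^sup>2 \<le> real N" unfolding N_def by linarith
  then have m: "m \<le> s" unfolding s_def by (rule real_le_rsqrt)
  have "0 \<le> (\<bar>a\<bar> + 2 * \<bar>b\<bar>) / c" using c by simp
  then have s2: "2 \<le> s" using m by (simp add: m_def)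
  have N: "real N = s * s" unfolding s_def by simp
  then have "1 \<le> real N" using mult_mono[of 2 s 2 s] s2 by simp
  have "m * s \<le> s * s" using m s2 by (intro mult_right_mono) auto
  then have "(m - 2) * s < real N - 1" using N s2 unfolding left_diff_distrib by linarith
  then have large: "(m - 2) * s * c < (real N - 1) * c" using c by (rule mult_strict_right_mono)
  have "b * sqrt (2 * real N + 1) \<le> \<bar>b\<bar> * sqrt (2 * real N + 1)"
    by (simp add: mult_right_mono)
  also have "\<dots> \<le> \<bar>b\<bar> * (2 * s)"
    using N s2 mult_mono[of 2 s 2 s]
    by (intro mult_left_mono real_le_lsqrt) (simp_all add: power2_eq_square)
  finally have "b * sqrt (2 * real N + 1) \<le> \<bar>b\<bar> * (2 * s)" .
  moreover have "a \<le> \<bar>a\<bar> * s" using mult_left_mono[of 1 s "\<bar>a\<bar>"] s2 by linarith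
  ultimately have "a + b * sqrt (2 * real N + 1) \<le> (\<bar>a\<bar> + 2 * \<bar>b\<bar>) * s"
    by (simp add: algebra_simps)
  also have "\<dots> = (m - 2) * s * c"
    using c by (simp add: m_def)
  also note large
  finally show ?thesis using \<open>1 \<le> real N\<close> by auto
qed

theorem mainTheorem4:
  fixes T K :: real and r :: ennreal
  assumes "T > 0" and "1 \<le> r" and "K \<ge> 0"
  shows "\<not> controllable 0 T r K"
proof
  assume "controllable 0 T r K"
  then obtain u where adm: "admissible T u" and Lr: "Lr_bound T r u K"
    and final: "mild T (indicator {1}) u \<in> l2" "l2norm (mild T (indicator {1}) u) \<le> 0"
    unfolding controllable_def
    using indicator_singleton_l2 l2norm_indicator_singleton by fastforce
  have null: "mild T (indicator {1}) u x = 0" for x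
    using abs_le_l2norm[OF final(1), of x] final(2) by simp
  define C where "C = control_L1_bound T r K"
  obtain N :: nat where N: "1 \<le> N" and large: "2 * exp (5 * T) +
      2 * exp (10 * T) * C * sqrt (2 * real N + 1) < (real N - 1) * exp (-2 * T)"
    using exists_nat_sqrt_dominated[OF exp_gt_zero, where a="2 * exp (5 * T)"
        and b="2 * exp (10 * T) * C"] by blast
  have "(\<Sum>x\<in>{-int N..int N}. test_fn N x * S T (indicator {1}) x) =
      - (\<Sum>x\<in>{-int N..int N}. test_fn N x * (LINT \<tau>:{0..T}|lborel. S (T - \<tau>) (extD (u \<tau>)) x))"
    using null by (simp add: mild_def eq_neg_iff_add_eq_0 flip: sum.distrib distrib_left)
  then have "(\<Sum>x\<in>{-int N..int N}. test_fn N x * S T (indicator {1}) x) \<le>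
      2 * exp (10 * T) * C * sqrt (2 * real N + 1)"
    using abs_sum_test_fn_control_term_le[OF assms adm Lr, of N] by (simp add: C_def mult_ac)
  then show False
    using sum_test_fn_S_indicator_ge[OF N less_imp_le[OF assms(1)]] large by linarith
qed

end
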